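(* Let $p>3$ be a prime, $q=p^e$, and let $n\ge 0$ be an even integer. Then: (i) $D_{n,3}(1,x)=\dfrac{1}{2^n}f_n(1-4x)$ for every $x\in\mathbb{F}_q$; (ii) $D_{n,3}(1,x)$ is a permutation polynomial of $\mathbb{F}_q$ if and only if $f_n(x)$ is a permutation polynomial of $\mathbb{F}_q$.
   Context: For $n\ge 1$ and $a\in\mathbb{F}_q$, $D_{n,3}(a,x)=\sum_{i=0}^{\lfloor n/2\rfloor}\frac{n-3i}{n-i}\binom{n-i}{i}(-x)^i a^{n-2i}\in\mathbb{F}_q[x]$, where each coefficient $\frac{n-3i}{n-i}\binom{n-i}{i}$ is an integer read modulo $p$; and $D_{0,3}(a,x)=-1$. For even $n\ge0$, $f_n(x)\in\mathbb{Z}[x]$ (viewed in $\mathbb{F}_q[x]$ by reduction mod $p$) is $$f_n(x)=-x^{n/2}+\sum_{j=0}^{n/2-1}\frac{3n-8j-1}{n+1}\binom{n+1}{2j+1}x^j,$$ where $\frac{3n-8j-1}{n+1}\binom{n+1}{2j+1}=3\binom{n}{2j+1}-\binom{n}{2j}$ is an integer. A polynomial $g\in\mathbb{F}_q[x]$ is a permutation polynomial of $\mathbb{F}_q$ if $c\mapsto g(c)$ is a bijection $\mathbb{F}_q\to\mathbb{F}_q$. *)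

theory Defs
  imports "HOL-Computational_Algebra.Polynomial" "HOL-Library.Cardinality"
begin

text \<open>Integer coefficient (n-3i)/(n-i) * binom(n-i,i) (an exact integer for n \<ge> 1, i \<le> n/2).\<close>
definition D3_coeff :: "nat \<Rightarrow> nat \<Rightarrow> int" where
  "D3_coeff n i = ((int n - 3 * int i) * int ((n - i) choose i)) div int (n - i)"

definition D3 :: "nat \<Rightarrow> 'a::comm_ring_1 \<Rightarrow> 'a poly" where
  "D3 n a = (if n = 0 then [:-1:] else
     (\<Sum>i\<le>n div 2. smult (of_int (D3_coeff n i) * a ^ (n - 2 * i)) ([:0, -1:] ^ i)))"

definition f_poly :: "nat \<Rightarrow> 'a::comm_ring_1 poly" where
  "f_poly n = - monom 1 (n div 2) +
     (\<Sum>j<n div 2. monom (of_int (3 * int (n choose (2*j+1)) - int (n choose (2*j)))) j)"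

definition permutation_polynomial :: "'a::comm_semiring_0 poly \<Rightarrow> bool" where
  "permutation_polynomial g \<longleftrightarrow> bij (\<lambda>c. poly g c)"

end

theory Submission
  imports Defs
begin

text \<open>Put \<open>t = -x\<close> and \<open>y = 1 - 4x\<close>. The sums \<open>E\<^sub>n(t) = \<Sum>\<^sub>i C(n-i,i) t\<^sup>i\<close>
  (\<open>fib_sum\<close>) satisfy \<open>E\<^sub>n\<^sub>+\<^sub>2 = E\<^sub>n\<^sub>+\<^sub>1 + t E\<^sub>n\<close>, so \<open>2\<^sup>n E\<^sub>n(t)\<close> obeys
  \<open>u\<^sub>n\<^sub>+\<^sub>2 = 2 u\<^sub>n\<^sub>+\<^sub>1 + (y - 1) u\<^sub>n\<close>, the recurrence with characteristic roots \<open>1 \<plusminus> \<surd>y\<close>.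
  Writing \<open>(1 + \<surd>y)\<^sup>n = P\<^sub>n(y) + \<surd>y Q\<^sub>n(y)\<close> (\<open>even_binom_sum\<close>, \<open>odd_binom_sum\<close>),
  \<open>Q\<^sub>n(y)\<close> obeys the same recurrence, and comparing initial values gives
  \<open>2\<^sup>n E\<^sub>n(t) = Q\<^sub>n\<^sub>+\<^sub>1(y)\<close>. Binomial absorption splits each coefficient of \<open>D\<^sub>n\<^sub>,\<^sub>3(1,x)\<close>
  into two binomial coefficients, giving \<open>D\<^sub>n\<^sub>,\<^sub>3(1,x) = E\<^sub>n(t) - 2t E\<^sub>n\<^sub>-\<^sub>2(t)\<close>, and the
  recurrences then turn \<open>2\<^sup>n D\<^sub>n\<^sub>,\<^sub>3(1,x)\<close> into \<open>3Q\<^sub>n(y) - P\<^sub>n(y) = f\<^sub>n(y)\<close>, over any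
  commutative ring. When \<open>2\<close> is invertible the two value maps differ by affine bijections,
  so one is bijective iff the other is.\<close>

lemma sum_atMost_eq_if_vanishing:
  fixes k m m' :: nat
  assumes "\<And>j. k < j \<Longrightarrow> g j = 0" and "k \<le> m" and "k \<le> m'"
  shows "sum g {..m} = sum g {..m'}"
proof -
  have eq_k: "sum g {..l} = sum g {..k}" if "k \<le> l" for l
  proof (rule sum.mono_neutral_right)
    show "\<forall>j\<in>{..l} - {..k}. g j = 0"
      using assms(1) by auto
  qed (use that in auto)
  show ?thesis using eq_k[OF assms(2)] eq_k[OF assms(3)] by (rule trans_sym)
qed

definition fib_sum :: "nat \<Rightarrow> 'a::comm_ring_1 \<Rightarrow> 'a" where
  "fib_sum n t = (\<Sum>i\<le>n. of_nat ((n - i) choose i) * t ^ i)"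

definition even_binom_sum :: "nat \<Rightarrow> 'a::comm_ring_1 \<Rightarrow> 'a" where
  "even_binom_sum n y = (\<Sum>j\<le>n. of_nat (n choose (2 * j)) * y ^ j)"

definition odd_binom_sum :: "nat \<Rightarrow> 'a::comm_ring_1 \<Rightarrow> 'a" where
  "odd_binom_sum n y = (\<Sum>j\<le>n. of_nat (n choose (2 * j + 1)) * y ^ j)"

lemma fib_sum_upto:
  assumes "n div 2 \<le> m"
  shows "fib_sum n t = (\<Sum>i\<le>m. of_nat ((n - i) choose i) * t ^ i)"
  unfolding fib_sum_def
proof (rule sum_atMost_eq_if_vanishing[where k = "n div 2"])
  fix i assume "n div 2 < i"
  then have "n - i < i" by linarith
  then show "of_nat ((n - i) choose i) * t ^ i = 0" by (simp add: binomial_eq_0)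
qed (use assms in simp_all)

lemma even_binom_sum_upto:
  assumes "n div 2 \<le> m"
  shows "even_binom_sum n y = (\<Sum>j\<le>m. of_nat (n choose (2 * j)) * y ^ j)"
  unfolding even_binom_sum_def
proof (rule sum_atMost_eq_if_vanishing[where k = "n div 2"])
  fix j assume "n div 2 < j"
  then have "n < 2 * j" by linarith
  then show "of_nat (n choose (2 * j)) * y ^ j = 0" by (simp add: binomial_eq_0)
qed (use assms in simp_all)

lemma odd_binom_sum_upto:
  assumes "n div 2 \<le> m"
  shows "odd_binom_sum n y = (\<Sum>j\<le>m. of_nat (n choose (2 * j + 1)) * y ^ j)"
  unfolding odd_binom_sum_def
proof (rule sum_atMost_eq_if_vanishing[where k = "n div 2"])
  fix j assume "n div 2 < j"
  then have "n < 2 * j + 1" by linarith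
  then show "of_nat (n choose (2 * j + 1)) * y ^ j = 0" by (simp add: binomial_eq_0)
qed (use assms in simp_all)

lemma odd_binom_sum_Suc: "odd_binom_sum (Suc n) y = even_binom_sum n y + odd_binom_sum n y"
proof -
  have "odd_binom_sum (Suc n) y
      = (\<Sum>j\<le>Suc n. of_nat (n choose (2 * j)) * y ^ j + of_nat (n choose (2 * j + 1)) * y ^ j)"
    unfolding odd_binom_sum_def by (intro sum.cong) (auto simp: algebra_simps)
  also have "\<dots> = even_binom_sum n y + odd_binom_sum n y"
    by (simp add: sum.distrib even_binom_sum_upto[of n "Suc n"] odd_binom_sum_upto[of n "Suc n"])
  finally show ?thesis .
qed

lemma even_binom_sum_Suc: "even_binom_sum (Suc n) y = even_binom_sum n y + y * odd_binom_sum n y"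
proof -
  have "even_binom_sum (Suc n) y = 1 + (\<Sum>k\<le>n. of_nat (Suc n choose (2 * k + 2)) * y ^ Suc k)"
    unfolding even_binom_sum_def by (subst sum.atMost_Suc_shift) (simp add: mult_2 add_ac)
  also have "\<dots> = 1 + (\<Sum>k\<le>n. of_nat (n choose (2 * k + 2)) * y ^ Suc k)
      + y * (\<Sum>k\<le>n. of_nat (n choose (2 * k + 1)) * y ^ k)"
    by (simp add: sum.distrib sum_distrib_left algebra_simps numeral_2_eq_2)
  also have "1 + (\<Sum>k\<le>n. of_nat (n choose (2 * k + 2)) * y ^ Suc k)
      = (\<Sum>j\<le>Suc n. of_nat (n choose (2 * j)) * y ^ j)"
    by (subst sum.atMost_Suc_shift) (simp add: mult_2 add_ac)
  also have "\<dots> = even_binom_sum n y"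
    by (rule even_binom_sum_upto[symmetric]) simp
  finally show ?thesis unfolding odd_binom_sum_def .
qed

lemma odd_binom_sum_Suc_Suc:
  "odd_binom_sum (Suc (Suc n)) y = 2 * odd_binom_sum (Suc n) y + (y - 1) * odd_binom_sum n y"
  by (simp add: odd_binom_sum_Suc even_binom_sum_Suc algebra_simps)

lemma fib_sum_Suc_Suc: "fib_sum (Suc (Suc n)) t = fib_sum (Suc n) t + t * fib_sum n t"
proof -
  have pascal: "(Suc n - k) choose Suc k = ((n - k) choose k) + ((n - k) choose Suc k)"
    if "k \<le> Suc n" for k
    using that by (cases "k = Suc n") (simp_all add: Suc_diff_le)
  have "fib_sum (Suc (Suc n)) t = 1 + (\<Sum>k\<le>Suc n. of_nat ((Suc n - k) choose Suc k) * t ^ Suc k)"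
    unfolding fib_sum_def by (subst sum.atMost_Suc_shift) simp
  also have "\<dots> = 1 + (\<Sum>k\<le>Suc n. of_nat ((n - k) choose Suc k) * t ^ Suc k)
      + t * (\<Sum>k\<le>Suc n. of_nat ((n - k) choose k) * t ^ k)"
    by (simp add: pascal algebra_simps sum.distrib sum_distrib_left)
  also have "1 + (\<Sum>k\<le>Suc n. of_nat ((n - k) choose Suc k) * t ^ Suc k)
      = (\<Sum>i\<le>Suc (Suc n). of_nat ((Suc n - i) choose i) * t ^ i)"
    by (subst (2) sum.atMost_Suc_shift) simp
  also have "\<dots> = fib_sum (Suc n) t"
    by (rule fib_sum_upto[symmetric]) simp
  also have "(\<Sum>k\<le>Suc n. of_nat ((n - k) choose k) * t ^ k) = fib_sum n t"
    by (rule fib_sum_upto[symmetric]) simp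
  finally show ?thesis .
qed

lemma two_power_mult_fib_sum:
  fixes x :: "'a::comm_ring_1"
  shows "2 ^ n * fib_sum n (- x) = odd_binom_sum (Suc n) (1 - 4 * x)"
proof -
  define y :: 'a where "y = 1 - 4 * x"
  have "2 ^ n * fib_sum n (- x) = odd_binom_sum (Suc n) y
      \<and> 2 ^ Suc n * fib_sum (Suc n) (- x) = odd_binom_sum (Suc (Suc n)) y"
  proof (induction n)
    case 0
    show ?case
      by (simp add: fib_sum_def odd_binom_sum_Suc even_binom_sum_Suc
          even_binom_sum_def odd_binom_sum_def binomial_eq_0)
  next
    case (Suc n)
    have "2 ^ Suc (Suc n) * fib_sum (Suc (Suc n)) (- x)
        = 2 * (2 ^ Suc n * fib_sum (Suc n) (- x)) - 4 * x * (2 ^ n * fib_sum n (- x))"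
      by (simp add: fib_sum_Suc_Suc algebra_simps)
    also have "\<dots> = odd_binom_sum (Suc (Suc (Suc n))) y"
      using Suc.IH by (simp add: odd_binom_sum_Suc_Suc[of "Suc n"] y_def algebra_simps)
    finally show ?case using Suc.IH by simp
  qed
  then show ?thesis unfolding y_def by simp
qed

lemma D3_coeff_0: "n \<ge> 1 \<Longrightarrow> D3_coeff n 0 = 1"
  by (simp add: D3_coeff_def)

lemma D3_coeff_Suc:
  assumes "2 * Suc k \<le> n"
  shows "D3_coeff n (Suc k) = int ((n - Suc k) choose Suc k) - 2 * int ((n - Suc k - 1) choose k)"
proof -
  define m where "m = n - Suc k"
  have m: "Suc k \<le> m" "n = m + Suc k" using assms unfolding m_def by auto
  have absorb: "int (Suc k) * int (m choose Suc k) = int m * int ((m - 1) choose k)"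
    using arg_cong[OF binomial_absorption[of k m], of int] by (simp only: of_nat_mult)
  have "(int n - 3 * int (Suc k)) * int (m choose Suc k)
      = int m * int (m choose Suc k) - 2 * (int (Suc k) * int (m choose Suc k))"
    using m by (simp add: algebra_simps)
  also have "\<dots> = int m * (int (m choose Suc k) - 2 * int ((m - 1) choose k))"
    unfolding absorb by (simp add: algebra_simps)
  finally show ?thesis
    using m unfolding D3_coeff_def m_def[symmetric] by simp
qed

lemma poly_D3_one:
  "n \<ge> 1 \<Longrightarrow> poly (D3 n 1) x = (\<Sum>i\<le>n div 2. of_int (D3_coeff n i) * (- x) ^ i)"
  by (simp add: D3_def poly_sum poly_power)

lemma poly_D3_one_eq_fib_sum:
  fixes x :: "'a::comm_ring_1"
  shows "poly (D3 (Suc (Suc m)) 1) x = fib_sum (Suc (Suc m)) (- x) + 2 * x * fib_sum m (- x)"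
proof -
  define h where "h = m div 2"
  define t where "t = - x"
  have half: "Suc (Suc m) div 2 = Suc h" unfolding h_def by simp
  have "poly (D3 (Suc (Suc m)) 1) x = (\<Sum>i\<le>Suc h. of_int (D3_coeff (Suc (Suc m)) i) * t ^ i)"
    using poly_D3_one[of "Suc (Suc m)" x] half unfolding t_def by simp
  also have "\<dots> = 1 + (\<Sum>k\<le>h. of_int (D3_coeff (Suc (Suc m)) (Suc k)) * t ^ Suc k)"
    by (subst sum.atMost_Suc_shift) (simp add: D3_coeff_0)
  also have "(\<Sum>k\<le>h. of_int (D3_coeff (Suc (Suc m)) (Suc k)) * t ^ Suc k)
      = (\<Sum>k\<le>h. of_nat ((Suc m - k) choose Suc k) * t ^ Suc k)
        - 2 * t * (\<Sum>k\<le>h. of_nat ((m - k) choose k) * t ^ k)"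
    unfolding sum_distrib_left sum_subtractf[symmetric]
    by (rule sum.cong) (simp_all add: D3_coeff_Suc h_def algebra_simps)
  also have "(\<Sum>k\<le>h. of_nat ((m - k) choose k) * t ^ k) = fib_sum m t"
    by (rule fib_sum_upto[symmetric]) (simp add: h_def)
  also have "1 + ((\<Sum>k\<le>h. of_nat ((Suc m - k) choose Suc k) * t ^ Suc k) - 2 * t * fib_sum m t)
      = (\<Sum>i\<le>Suc h. of_nat ((Suc (Suc m) - i) choose i) * t ^ i) - 2 * t * fib_sum m t"
    by (subst sum.atMost_Suc_shift) simp
  also have "(\<Sum>i\<le>Suc h. of_nat ((Suc (Suc m) - i) choose i) * t ^ i) = fib_sum (Suc (Suc m)) t"
    by (rule fib_sum_upto[symmetric]) (simp add: half h_def)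
  finally show ?thesis unfolding t_def by simp
qed

lemma poly_f_poly:
  fixes y :: "'a::comm_ring_1"
  assumes "even n"
  shows "poly (f_poly n) y = 3 * odd_binom_sum n y - even_binom_sum n y"
proof -
  define h where "h = n div 2"
  have n: "n = 2 * h" using assms unfolding h_def by simp
  have "3 * odd_binom_sum n y - even_binom_sum n y
      = (\<Sum>j\<le>h. of_int (3 * int (n choose (2 * j + 1)) - int (n choose (2 * j))) * y ^ j)"
    using odd_binom_sum_upto[of n h y] even_binom_sum_upto[of n h y] unfolding h_def
    by (simp add: sum_subtractf sum_distrib_left algebra_simps)
  also have "\<dots> = (\<Sum>j<h. of_int (3 * int (n choose (2 * j + 1)) - int (n choose (2 * j))) * y ^ j)
      - y ^ h"
    by (simp add: lessThan_Suc_atMost[symmetric] n binomial_eq_0)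
  also have "\<dots> = poly (f_poly n) y"
    unfolding f_poly_def h_def by (simp add: poly_sum poly_monom)
  finally show ?thesis by simp
qed

lemma two_power_mult_poly_D3_one:
  fixes x :: "'a::comm_ring_1"
  assumes "even n"
  shows "2 ^ n * poly (D3 n 1) x = poly (f_poly n) (1 - 4 * x)"
proof (cases "n = 0")
  case True
  then show ?thesis by (simp add: D3_def f_poly_def)
next
  case False
  define m where "m = n - 2"
  have n: "n = Suc (Suc m)"
    using assms False unfolding m_def by presburger
  define y where "y = 1 - 4 * x"
  have "2 ^ n * poly (D3 n 1) x
      = 2 ^ Suc (Suc m) * fib_sum (Suc (Suc m)) (- x) + 8 * x * (2 ^ m * fib_sum m (- x))"
    unfolding n poly_D3_one_eq_fib_sum by (simp add: algebra_simps)
  also have "\<dots> = odd_binom_sum (Suc (Suc (Suc m))) y + 8 * x * odd_binom_sum (Suc m) y"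
    unfolding two_power_mult_fib_sum y_def ..
  also have "\<dots> = 3 * odd_binom_sum (Suc (Suc m)) y - even_binom_sum (Suc (Suc m)) y"
    by (simp add: odd_binom_sum_Suc even_binom_sum_Suc y_def algebra_simps)
  also have "\<dots> = poly (f_poly n) y"
    using poly_f_poly[OF assms, of y] n by simp
  finally show ?thesis unfolding y_def .
qed

lemma bij_affine:
  fixes a b :: "'a::field"
  assumes "a \<noteq> 0"
  shows "bij (\<lambda>z. a * z + b)"
proof (rule bijI)
  show "inj (\<lambda>z. a * z + b)" using assms by (auto intro: injI)
  show "surj (\<lambda>z. a * z + b)"
  proof (rule surjI)
    show "a * ((w - b) / a) + b = w" for w using assms by simp
  qed
qed

lemma bij_iff_bij_affine_reparam:
  fixes f g :: "'a::field \<Rightarrow> 'a"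
  assumes "a \<noteq> 0" and "b \<noteq> 0" and "\<And>c. g c = a * f (b * c + d)"
  shows "bij g \<longleftrightarrow> bij f"
proof -
  have outer: "bij ((*) a)"
    using bij_affine[OF assms(1), of 0] by simp
  have inner: "bij (\<lambda>c. b * c + d)"
    using assms(2) by (rule bij_affine)
  have g: "g = ((*) a \<circ> f) \<circ> (\<lambda>c. b * c + d)"
    by (simp add: fun_eq_iff assms(3))
  have "bij g \<longleftrightarrow> bij ((*) a \<circ> f)"
    unfolding g by (rule bij_betw_comp_iff[OF inner, symmetric])
  also have "\<dots> \<longleftrightarrow> bij f"
    by (rule bij_betw_comp_iff2[OF outer, symmetric]) simp
  finally show ?thesis .
qed

theorem theorem3p2:
  fixes p e n :: nat and x :: "'a::{field,finite}"
  assumes "prime p" and "p > 3"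
    and "CHAR('a) = p" and "CARD('a) = p ^ e"
    and "even n"
  shows "poly (D3 n 1) x = (1 / 2 ^ n) * poly (f_poly n) (1 - 4 * x)
       \<and> (permutation_polynomial (D3 n (1::'a)) \<longleftrightarrow> permutation_polynomial (f_poly n :: 'a poly))"
proof -
  have two: "(2::'a) \<noteq> 0"
    using of_nat_eq_0_iff_char_dvd[of 2, where 'a = 'a] assms(2,3) by (auto dest: dvd_imp_le)
  have four: "(4::'a) \<noteq> 0"
    using no_zero_divisors[OF two two] by simp
  have poly_D3_eq: "poly (D3 n 1) c = (1 / 2 ^ n) * poly (f_poly n) (1 - 4 * c)" for c :: 'a
    using two_power_mult_poly_D3_one[OF assms(5), of c] two by (simp add: field_simps)
  have "bij (poly (D3 n (1::'a))) \<longleftrightarrow> bij (poly (f_poly n :: 'a poly))"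
    by (rule bij_iff_bij_affine_reparam[where a = "1 / 2 ^ n" and b = "- 4" and d = 1])
      (use two four poly_D3_eq in simp_all)
  then show ?thesis
    unfolding permutation_polynomial_def using poly_D3_eq by simp
qed

end
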